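(* For all nonnegative integers $A$, $k$ and $t$, $$k^t \left\{ {A \atop k} \right\} = \sum_{\substack{u,v,w \in \mathbb{N}_0 \\ u+v+w = t}} \binom{t}{u} (-1)^{v} \left\{ {v+w \atop v} \right\} \left\{ {A+u \atop k-v} \right\}.$$
   Context: $\mathbb{N}_0$ denotes the nonnegative integers. $\left\{ {n \atop m} \right\}$ is the Stirling number of the second kind (the number of partitions of an $n$-element set into $m$ nonempty blocks), with $\left\{ {0 \atop 0} \right\} = 1$, $\left\{ {n \atop 0} \right\} = 0$ for $n > 0$, and $\left\{ {n \atop m} \right\} = 0$ whenever $m < 0$ or $m > n$. The convention $0^0 = 1$ is used. *)

theory Defs
  imports "HOL-Combinatorics.Stirling"
begin

definition StirlingZ :: "nat \<Rightarrow> int \<Rightarrow> nat" where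
  "StirlingZ n m = (if m < 0 then 0 else Stirling n (nat m))"

end

theory Submission
  imports Defs
begin

text \<open>Write \<open>E\<close> for the shift \<open>f \<mapsto> f (Suc _)\<close> acting on sequences indexed by \<open>A\<close>, and \<open>D = k - E\<close>.
  The recurrence of the Stirling numbers says \<open>D\<close> maps \<open>S(_, k - v)\<close> to
  \<open>v S(_, k - v) - S(_, k - v - 1)\<close>, so by induction
  \<open>D\<^sup>n S(_, k) = \<Sum>\<^sub>v (-1)\<^sup>v S(n, v) S(_, k - v)\<close>.
  Since \<open>E\<close> and \<open>D\<close> commute, the binomial theorem gives
  \<open>\<Sum>\<^sub>u C(t, u) E\<^sup>u D\<^sup>t\<^sup>-\<^sup>u = (E + D)\<^sup>t = k\<^sup>t\<close>; applied to \<open>S(_, k)\<close> and evaluated at \<open>A\<close>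
  this is the identity, with \<open>w = t - u - v\<close>.\<close>

definition shift_diff :: "'a::comm_ring_1 \<Rightarrow> (nat \<Rightarrow> 'a) \<Rightarrow> nat \<Rightarrow> 'a" where
  "shift_diff c f n = c * f n - f (Suc n)"

lemma funpow_shift_diff_Suc:
  "(shift_diff c ^^ Suc m) f n = c * (shift_diff c ^^ m) f n - (shift_diff c ^^ m) f (Suc n)"
  by (simp add: shift_diff_def)

lemma binomial_shift_diff:
  fixes c :: "'a::comm_ring_1"
  shows "(\<Sum>u\<le>t. of_nat (t choose u) * (shift_diff c ^^ (t - u)) f (n + u)) = c ^ t * f n"
proof (induction t arbitrary: n)
  case 0
  then show ?case by simp
next
  case (Suc t)
  let ?g = "\<lambda>m. (shift_diff c ^^ m) f"
  have lower: "(\<Sum>u\<le>t. of_nat (t choose u) * ?g (Suc t - u) (n + u))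
      = c * (\<Sum>u\<le>t. of_nat (t choose u) * ?g (t - u) (n + u))
        - (\<Sum>u\<le>t. of_nat (t choose u) * ?g (t - u) (Suc (n + u)))"
    unfolding sum_distrib_left sum_subtractf[symmetric]
    by (rule sum.cong) (auto simp: Suc_diff_le shift_diff_def algebra_simps)
  have "(\<Sum>u\<le>t. of_nat (t choose u) * ?g (Suc t - u) (n + u))
      = (\<Sum>u\<le>Suc t. of_nat (t choose u) * ?g (Suc t - u) (n + u))"
    by (simp add: binomial_eq_0)
  also have "\<dots> = ?g (Suc t) n + (\<Sum>u\<le>t. of_nat (t choose Suc u) * ?g (t - u) (n + Suc u))"
    by (subst sum.atMost_Suc_shift) simp
  finally have upper: "(\<Sum>u\<le>t. of_nat (t choose u) * ?g (Suc t - u) (n + u))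
      = ?g (Suc t) n + (\<Sum>u\<le>t. of_nat (t choose Suc u) * ?g (t - u) (n + Suc u))" .
  have "(\<Sum>u\<le>Suc t. of_nat (Suc t choose u) * ?g (Suc t - u) (n + u))
      = ?g (Suc t) n + (\<Sum>u\<le>t. of_nat (Suc t choose Suc u) * ?g (t - u) (n + Suc u))"
    by (subst sum.atMost_Suc_shift) simp
  also have "\<dots> = ?g (Suc t) n + (\<Sum>u\<le>t. of_nat (t choose Suc u) * ?g (t - u) (n + Suc u))
      + (\<Sum>u\<le>t. of_nat (t choose u) * ?g (t - u) (Suc (n + u)))"
    by (simp add: sum.distrib[symmetric] algebra_simps)
  also have "\<dots> = c * (\<Sum>u\<le>t. of_nat (t choose u) * ?g (t - u) (n + u))"
    using lower upper by simp
  finally show ?case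
    using Suc.IH by simp
qed

lemma StirlingZ_Suc:
  "int (StirlingZ (Suc n) m) = m * int (StirlingZ n m) + int (StirlingZ n (m - 1))"
proof (cases "m > 0")
  case True
  then obtain j where "m = int (Suc j)"
    by (metis Suc_pred' of_nat_0_less_iff pos_int_cases)
  then have "nat m = Suc j" "nat (m - 1) = j" "m = 1 + int j"
    by auto
  then show ?thesis
    by (simp add: StirlingZ_def algebra_simps)
qed (auto simp: StirlingZ_def)

lemma funpow_shift_diff_StirlingZ:
  "(shift_diff k ^^ n) (\<lambda>A. int (StirlingZ A k)) A
     = (\<Sum>v\<le>n. (-1) ^ v * int (Stirling n v) * int (StirlingZ A (k - int v)))"
proof (induction n arbitrary: A)
  case 0
  then show ?case by simp
next
  case (Suc n)
  let ?s = "\<lambda>v. int (StirlingZ A (k - int v))"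
  have "(shift_diff k ^^ Suc n) (\<lambda>A. int (StirlingZ A k)) A
      = (\<Sum>v\<le>n. (-1) ^ v * int (Stirling n v) * (int v * ?s v - ?s (Suc v)))"
    unfolding funpow_shift_diff_Suc Suc.IH StirlingZ_Suc sum_distrib_left
      sum_subtractf[symmetric]
    by (rule sum.cong) (auto simp: algebra_simps)
  also have "\<dots> = (\<Sum>v\<le>Suc n. (-1) ^ v * (int v * int (Stirling n v)) * ?s v)
      + (\<Sum>v\<le>n. (-1) ^ Suc v * int (Stirling n v) * ?s (Suc v))"
    by (simp add: sum.distrib[symmetric] algebra_simps)
  also have "(\<Sum>v\<le>n. (-1) ^ Suc v * int (Stirling n v) * ?s (Suc v))
      = (\<Sum>v\<le>Suc n. (-1) ^ v * (if v = 0 then 0 else int (Stirling n (v - 1))) * ?s v)"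
    by (subst sum.atMost_Suc_shift) simp
  also have "(\<Sum>v\<le>Suc n. (-1) ^ v * (int v * int (Stirling n v)) * ?s v)
      + (\<Sum>v\<le>Suc n. (-1) ^ v * (if v = 0 then 0 else int (Stirling n (v - 1))) * ?s v)
      = (\<Sum>v\<le>Suc n. (-1) ^ v * int (Stirling (Suc n) v) * ?s v)"
    unfolding sum.distrib[symmetric]
  proof (rule sum.cong)
    fix v
    show "(-1) ^ v * (int v * int (Stirling n v)) * ?s v
        + (-1) ^ v * (if v = 0 then 0 else int (Stirling n (v - 1))) * ?s v
        = (-1) ^ v * int (Stirling (Suc n) v) * ?s v"
      by (cases v) (simp_all add: algebra_simps)
  qed simp
  finally show ?case .
qed

lemma sum_triples_with_sum:
  fixes t :: nat
  shows "(\<Sum>(u, v, w) \<in> {(u, v, w). u + v + w = t}. f u v w)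
     = (\<Sum>u\<le>t. \<Sum>v\<le>t - u. f u v (t - u - v))"
proof -
  let ?g = "\<lambda>(u, v). (u, v, t - u - v)"
  have triples: "{(u, v, w). u + v + w = t} = ?g ` (SIGMA u:{..t}. {..t - u})"
    by (auto simp: image_iff)
  have "inj_on ?g (SIGMA u:{..t}. {..t - u})"
    by (auto simp: inj_on_def)
  then show ?thesis
    unfolding triples by (simp add: sum.reindex sum.Sigma split_def)
qed

theorem lemma1:
  fixes A k t :: nat
  shows "int (k ^ t * Stirling A k) =
    (\<Sum>(u, v, w) \<in> {(u, v, w). u + v + w = t}.
       int (t choose u) * (-1) ^ v * int (Stirling (v + w) v)
       * int (StirlingZ (A + u) (int k - int v)))"
proof -
  let ?s = "\<lambda>A. int (StirlingZ A (int k))"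
  have "int (k ^ t * Stirling A k) = (\<Sum>u\<le>t. int (t choose u) * (shift_diff (int k) ^^ (t - u)) ?s (A + u))"
    by (simp add: binomial_shift_diff StirlingZ_def)
  also have "\<dots> = (\<Sum>u\<le>t. \<Sum>v\<le>t - u. int (t choose u) * (-1) ^ v
      * int (Stirling (t - u) v) * int (StirlingZ (A + u) (int k - int v)))"
    by (simp add: funpow_shift_diff_StirlingZ sum_distrib_left algebra_simps)
  also have "\<dots> = (\<Sum>(u, v, w) \<in> {(u, v, w). u + v + w = t}.
       int (t choose u) * (-1) ^ v * int (Stirling (v + w) v)
       * int (StirlingZ (A + u) (int k - int v)))"
    unfolding sum_triples_with_sum
    by (intro sum.cong refl) auto
  finally show ?thesis .
qed

end
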